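(* Let $n\ge4$ be even, $p\ge n+1$ an integer, $c_1$ a positive integer, $a_k=pc_k$, $c_{k+1}=p^2c_k$, and let $T$, $I^{(k)}_i$ and $\lambda_1$ be as in the context. Then for every $k\ge1$ and every $1\le i\le n/2-1$: (1) $\lambda_1(I^{(k)}_{2i+1})\le\frac{1}{p-1}\lambda_1(I^{(k)}_{2i})$; (2) $\lambda_1(I^{(k)}_{2i})\le\frac{1}{c_k}\lambda_1(I^{(k)}_n)$; (3) $\lambda_1(I^{(k)}_{2i})\le\frac{1}{c_k-1}\lambda_1(I^{(k)}_1)$.
   Context: $\pi$ is the permutation of $\{1,\dots,n\}$ with top row $1,2,\dots,n$ and bottom row $n,3,2,5,4,\dots,n-1,n-2,1$. Right Rauzy induction: step "0" when the rightmost domain (top) interval is longer, "1" when the rightmost image (bottom) interval is longer. For $a,c>0$, $\dot\gamma_{m,a}=1^{n-1-m}0^a10^2$, $\gamma_{a,c}=0\,\dot\gamma_{n-2,a}\cdots\dot\gamma_{2,a}\,1^{c(n-1)}$; its transition matrix $\Theta_{a,c}$ (old lengths $=\Theta_{a,c}\cdot$new lengths) has row $1=(1,c,\dots,c)$, row $n=(1,c+1,\dots,c+1)$, and for $1\le i\le(n-2)/2$: row $2i$ has $0$ in column 1, $2$ in columns $2i,2i+1$, $1$ in the other columns among $2,\dots,n$; row $2i+1$ has $a$ in column $2i$, $a+1$ in column $2i+1$, $0$ elsewhere. $\Theta_k=\Theta_{a_k,c_k}$. $T$ is an IET of $[0,1)$ with permutation $\pi$ whose right Rauzy induction path is $\gamma_{a_1,c_1}\gamma_{a_2,c_2}\cdots$;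 $I^{(k)}$ is the interval on which the induced map lives after the first $k$ blocks and $I^{(k)}_1,\dots,I^{(k)}_n$ its exchanged subintervals; lengths satisfy $\ell^{(k-1)}=\Theta_k\ell^{(k)}$. For $v\ge0$, $|v|$ is the sum of entries and $\overline v=v/|v|$. $\lambda_1$ denotes the $T$-invariant Borel probability measure such that for every $k\ge0$, $(\lambda_1(I^{(k)}_i))_i$ is a positive multiple of $\lim_{m\to\infty}\overline{\Theta_{k+1}\cdots\Theta_me_1}$. *)

theory Defs
  imports Complex_Main
begin

text \<open>Vectors in R^n are functions nat => real, meaningful on indices 1..n;
n x n matrices are functions nat => nat => real, meaningful on 1..n x 1..n.\<close>

definition Theta :: "nat \<Rightarrow> real \<Rightarrow> real \<Rightarrow> nat \<Rightarrow> nat \<Rightarrow> real" where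
  "Theta n a c i j =
     (if i = 1 then (if j = 1 then 1 else c)
      else if i = n then (if j = 1 then 1 else c + 1)
      else if even i then (if j = 1 then 0 else if j = i \<or> j = i + 1 then 2 else 1)
      else (if j = i - 1 then a else if j = i then a + 1 else 0))"

definition mat_vec :: "nat \<Rightarrow> (nat \<Rightarrow> nat \<Rightarrow> real) \<Rightarrow> (nat \<Rightarrow> real) \<Rightarrow> nat \<Rightarrow> real" where
  "mat_vec n M v = (\<lambda>i. \<Sum>j = 1..n. M i j * v j)"

definition e1 :: "nat \<Rightarrow> real" where
  "e1 = (\<lambda>i. if i = 1 then 1 else 0)"

definition vsum :: "nat \<Rightarrow> (nat \<Rightarrow> real) \<Rightarrow> real" where
  "vsum n v = (\<Sum>i = 1..n. v i)"

definition normalize_vec :: "nat \<Rightarrow> (nat \<Rightarrow> real) \<Rightarrow> nat \<Rightarrow> real" where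
  "normalize_vec n v = (\<lambda>i. v i / vsum n v)"

text \<open>theta_prod n Th k d = Th(k+1) * Th(k+2) * ... * Th(k+d) * e1.\<close>
primrec theta_prod :: "nat \<Rightarrow> (nat \<Rightarrow> nat \<Rightarrow> nat \<Rightarrow> real) \<Rightarrow> nat \<Rightarrow> nat \<Rightarrow> nat \<Rightarrow> real" where
  "theta_prod n Th k 0 = e1"
| "theta_prod n Th k (Suc d) = mat_vec n (Th (k + 1)) (theta_prod n Th (k + 1) d)"

end

theory Submission
  imports Defs
begin

text \<open>For a parameter \<open>C\<close>, consider the cone of nonnegative vectors \<open>v\<close> with
\<open>(p - 1) v\<^sub>2\<^sub>i\<^sub>+\<^sub>1 \<le> v\<^sub>2\<^sub>i\<close>, \<open>C v\<^sub>2\<^sub>i \<le> v\<^sub>n\<close> and \<open>v\<^sub>n \<le> v\<^sub>1 + v\<^sub>2\<^sub>i\<close>.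
A direct computation with the rows of \<open>\<Theta>\<^bsub>pC,C\<^esub>\<close> shows that this matrix maps the cone
with parameter \<open>p\<^sup>2C\<close> into the cone with parameter \<open>C\<close>. Since \<open>e\<^sub>1\<close> lies in every cone and
\<open>c\<^sub>k\<^sub>+\<^sub>1 = p\<^sup>2c\<^sub>k\<close>, every vector \<open>\<Theta>\<^sub>k\<^sub>+\<^sub>1\<cdots>\<Theta>\<^sub>m e\<^sub>1\<close> lies in the cone with parameter
\<open>c\<^sub>k\<^sub>+\<^sub>1\<close>. The cones are closed under positive scaling and under limits, so the limit direction
\<open>\<lambda>\<^sub>1(I\<^sup>(\<^sup>k\<^sup>)\<^sub>i)\<close> lies in the cone with parameter \<open>c\<^sub>k\<^sub>+\<^sub>1 \<ge> c\<^sub>k\<close>, which gives the three estimates.\<close>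

definition in_cone :: "nat \<Rightarrow> real \<Rightarrow> real \<Rightarrow> (nat \<Rightarrow> real) \<Rightarrow> bool" where
  "in_cone n p C v \<longleftrightarrow> (\<forall>j\<in>{1..n}. 0 \<le> v j) \<and>
     (\<forall>i. 1 \<le> i \<and> 2 * i + 2 \<le> n \<longrightarrow>
        (p - 1) * v (2 * i + 1) \<le> v (2 * i) \<and> C * v (2 * i) \<le> v n \<and> v n \<le> v 1 + v (2 * i))"

lemma in_cone_e1: "in_cone n p C e1"
  by (auto simp: in_cone_def e1_def)

lemma in_cone_antimono:
  assumes "in_cone n p C' v" and "0 \<le> C" and "C \<le> C'"
  shows "in_cone n p C v"
proof -
  have "C * v (2 * i) \<le> v n" if "1 \<le> i" "2 * i + 2 \<le> n" for i
  proof -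
    have "0 \<le> v (2 * i)" and "C' * v (2 * i) \<le> v n"
      using assms(1) that by (auto simp: in_cone_def)
    with \<open>C \<le> C'\<close> show ?thesis
      by (meson mult_right_mono order_trans)
  qed
  with assms(1) show ?thesis
    by (auto simp: in_cone_def)
qed

lemma in_cone_scale:
  assumes "in_cone n p C v" and "0 \<le> s"
  shows "in_cone n p C (\<lambda>j. s * v j)"
proof -
  have "(p - 1) * (s * v (2 * i + 1)) \<le> s * v (2 * i)
      \<and> C * (s * v (2 * i)) \<le> s * v n \<and> s * v n \<le> s * v 1 + s * v (2 * i)"
    if "1 \<le> i" "2 * i + 2 \<le> n" for i
  proof -
    have "(p - 1) * v (2 * i + 1) \<le> v (2 * i)" "C * v (2 * i) \<le> v n" "v n \<le> v 1 + v (2 * i)"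
      using assms(1) that by (auto simp: in_cone_def)
    then show ?thesis
      using mult_left_mono[OF _ \<open>0 \<le> s\<close>] by (metis distrib_left mult.left_commute)
  qed
  with assms show ?thesis
    by (auto simp: in_cone_def)
qed

lemma in_cone_normalize_vec:
  assumes "in_cone n p C v"
  shows "in_cone n p C (normalize_vec n v)"
proof -
  have "0 \<le> vsum n v"
    using assms unfolding in_cone_def vsum_def by (auto intro: sum_nonneg)
  then have "in_cone n p C (\<lambda>j. inverse (vsum n v) * v j)"
    by (intro in_cone_scale[OF assms]) simp
  then show ?thesis
    by (simp add: normalize_vec_def divide_inverse mult.commute)
qed

lemma in_cone_limit:
  assumes cone: "\<And>d. in_cone n p C (u d)" and lim: "\<forall>j\<in>{1..n}. (\<lambda>d. u d j) \<longlonglongrightarrow> L j"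
  shows "in_cone n p C L"
proof -
  have lim_le: "a \<le> b" if "f \<longlonglongrightarrow> a" "g \<longlonglongrightarrow> b" "\<And>d. f d \<le> g d" for f g :: "nat \<Rightarrow> real" and a b
    using LIMSEQ_le[OF that(1,2)] that(3) by blast
  have "0 \<le> L j" if j: "j \<in> {1..n}" for j
  proof (rule lim_le)
    show "(\<lambda>d. u d j) \<longlonglongrightarrow> L j"
      using lim j by blast
    show "0 \<le> u d j" for d
      using cone[of d] j by (simp add: in_cone_def)
  qed simp
  moreover have "(p - 1) * L (2 * i + 1) \<le> L (2 * i) \<and> C * L (2 * i) \<le> L n \<and> L n \<le> L 1 + L (2 * i)"
    if i: "1 \<le> i" "2 * i + 2 \<le> n" for i
  proof -
    have even: "(\<lambda>d. u d (2 * i)) \<longlonglongrightarrow> L (2 * i)" and odd: "(\<lambda>d. u d (2 * i + 1)) \<longlonglongrightarrow> L (2 * i + 1)"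
      and first: "(\<lambda>d. u d 1) \<longlonglongrightarrow> L 1" and last: "(\<lambda>d. u d n) \<longlonglongrightarrow> L n"
      using lim i by simp_all
    have "(p - 1) * u d (2 * i + 1) \<le> u d (2 * i)" "C * u d (2 * i) \<le> u d n"
      "u d n \<le> u d 1 + u d (2 * i)" for d
      using cone[of d] i unfolding in_cone_def by blast+
    then show ?thesis
      using lim_le[OF tendsto_mult_left[OF odd] even] lim_le[OF tendsto_mult_left[OF even] last]
        lim_le[OF last tendsto_add[OF first even]]
      by blast
  qed
  ultimately show ?thesis
    by (simp add: in_cone_def)
qed

lemma in_cone_of_normalized_limit:
  assumes "\<And>d. in_cone n p C (v d)" and "0 < r"
    and "\<forall>j\<in>{1..n}. (\<lambda>d. normalize_vec n (v d) j) \<longlonglongrightarrow> L j / r"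
  shows "in_cone n p C L"
proof -
  have "in_cone n p C (\<lambda>j. L j / r)"
    using assms(3) by (rule in_cone_limit[OF in_cone_normalize_vec[OF assms(1)]])
  then have "in_cone n p C (\<lambda>j. r * (L j / r))"
    using \<open>0 < r\<close> by (intro in_cone_scale) auto
  with \<open>0 < r\<close> show ?thesis
    by simp
qed

lemma in_cone_estimates:
  assumes "in_cone n p C v" and "1 < p" and "0 < C" and "1 \<le> i" and "2 * i + 2 \<le> n"
  shows "v (2 * i + 1) \<le> 1 / (p - 1) * v (2 * i) \<and> v (2 * i) \<le> 1 / C * v n
    \<and> (C - 1) * v (2 * i) \<le> v 1"
proof -
  have odd_le_even: "(p - 1) * v (2 * i + 1) \<le> v (2 * i)"
    and even_le_last: "C * v (2 * i) \<le> v n" and "v n \<le> v 1 + v (2 * i)"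
    using assms(1,4,5) unfolding in_cone_def by blast+
  then have "(C - 1) * v (2 * i) \<le> v 1"
    by (simp add: algebra_simps)
  moreover have "v (2 * i + 1) \<le> 1 / (p - 1) * v (2 * i)"
    using odd_le_even \<open>1 < p\<close> by (simp add: field_simps mult.commute)
  moreover have "v (2 * i) \<le> 1 / C * v n"
    using even_le_last \<open>0 < C\<close> by (simp add: field_simps mult.commute)
  ultimately show ?thesis
    by blast
qed

lemma mat_vec_split_first_column:
  assumes "1 \<le> n"
  shows "mat_vec n M w i = M i 1 * w 1 + (\<Sum>j = 2..n. M i j * w j)"
proof -
  have "{1..n} = insert 1 {2..n}"
    using assms by auto
  then show ?thesis
    by (simp add: mat_vec_def)
qed

lemma mat_vec_Theta_first_row:
  assumes "1 \<le> n"
  shows "mat_vec n (Theta n A C) w 1 = w 1 + C * (\<Sum>j = 2..n. w j)"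
proof -
  have "(\<Sum>j = 2..n. Theta n A C 1 j * w j) = C * (\<Sum>j = 2..n. w j)"
    by (auto simp: Theta_def sum_distrib_left intro: sum.cong)
  with mat_vec_split_first_column[OF assms] show ?thesis
    by (simp add: Theta_def)
qed

lemma mat_vec_Theta_last_row:
  assumes "2 \<le> n"
  shows "mat_vec n (Theta n A C) w n = w 1 + (C + 1) * (\<Sum>j = 2..n. w j)"
proof -
  have "(\<Sum>j = 2..n. Theta n A C n j * w j) = (C + 1) * (\<Sum>j = 2..n. w j)"
    using assms by (auto simp: Theta_def sum_distrib_left intro: sum.cong)
  with mat_vec_split_first_column[of n] assms show ?thesis
    by (simp add: Theta_def)
qed

lemma mat_vec_Theta_even_row:
  assumes "1 \<le> i" and "2 * i + 1 < n"
  shows "mat_vec n (Theta n A C) w (2 * i) = (\<Sum>j = 2..n. w j) + w (2 * i) + w (2 * i + 1)"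
proof -
  have "(\<Sum>j = 2..n. Theta n A C (2 * i) j * w j)
      = (\<Sum>j = 2..n. w j + (if j = 2 * i then w j else 0) + (if j = 2 * i + 1 then w j else 0))"
    using assms by (intro sum.cong) (auto simp: Theta_def)
  also have "\<dots> = (\<Sum>j = 2..n. w j) + w (2 * i) + w (2 * i + 1)"
    using assms by (simp add: sum.distrib)
  finally show ?thesis
    using mat_vec_split_first_column[of n] assms by (simp add: Theta_def)
qed

lemma mat_vec_Theta_odd_row:
  assumes "1 \<le> i" and "2 * i + 1 < n"
  shows "mat_vec n (Theta n A C) w (2 * i + 1) = A * w (2 * i) + (A + 1) * w (2 * i + 1)"
proof -
  have "mat_vec n (Theta n A C) w (2 * i + 1)
      = (\<Sum>j = 1..n. (if j = 2 * i then A * w j else 0) + (if j = 2 * i + 1 then (A + 1) * w j else 0))"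
    unfolding mat_vec_def using assms by (intro sum.cong) (auto simp: Theta_def)
  with assms show ?thesis
    by (simp add: sum.distrib)
qed

lemma Theta_maps_cone:
  assumes "2 \<le> p" and "0 \<le> C" and w: "in_cone n p (p\<^sup>2 * C) w"
  shows "in_cone n p C (mat_vec n (Theta n (p * C) C) w)"
proof -
  let ?v = "mat_vec n (Theta n (p * C) C) w"
  define S where "S = (\<Sum>j = 2..n. w j)"
  have w_nonneg: "0 \<le> w j" if "1 \<le> j" "j \<le> n" for j
    using w that by (auto simp: in_cone_def)
  have "0 \<le> ?v j" for j
    unfolding mat_vec_def Theta_def using assms w_nonneg
    by (auto intro!: sum_nonneg mult_nonneg_nonneg)
  moreover have "(p - 1) * ?v (2 * i + 1) \<le> ?v (2 * i) \<and> C * ?v (2 * i) \<le> ?v n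
      \<and> ?v n \<le> ?v 1 + ?v (2 * i)" if i: "1 \<le> i" "2 * i + 2 \<le> n" for i
  proof -
    define x y where "x = w (2 * i)" and "y = w (2 * i + 1)"
    have "0 \<le> x" "0 \<le> y" "0 \<le> w 1"
      using i by (auto simp: x_def y_def intro: w_nonneg)
    have "w n \<le> S"
      unfolding S_def using i w_nonneg by (intro member_le_sum) auto
    have y_x: "(p - 1) * y \<le> x" and x_n: "p\<^sup>2 * C * x \<le> w n"
      using w i by (auto simp: in_cone_def x_def y_def)
    have v1: "?v 1 = w 1 + C * S"
      unfolding S_def using i by (intro mat_vec_Theta_first_row) simp
    have vn: "?v n = w 1 + (C + 1) * S"
      unfolding S_def using i by (intro mat_vec_Theta_last_row) simp
    have v_even: "?v (2 * i) = S + x + y"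
      unfolding S_def x_def y_def using i by (intro mat_vec_Theta_even_row) simp_all
    have v_odd: "?v (2 * i + 1) = p * C * x + (p * C + 1) * y"
      unfolding x_def y_def using i by (intro mat_vec_Theta_odd_row) simp_all
    have "(p - 1) * ?v (2 * i + 1) = (p - 1) * (p * C) * x + (p * C + 1) * ((p - 1) * y)"
      unfolding v_odd by (simp add: algebra_simps)
    also have "\<dots> \<le> (p - 1) * (p * C) * x + (p * C + 1) * x"
      using y_x assms by (simp add: mult_left_mono)
    also have "\<dots> = p\<^sup>2 * C * x + x"
      by (simp add: algebra_simps power2_eq_square)
    also have "\<dots> \<le> ?v (2 * i)"
      using x_n \<open>w n \<le> S\<close> \<open>0 \<le> y\<close> v_even by simp
    finally have odd_le_even: "(p - 1) * ?v (2 * i + 1) \<le> ?v (2 * i)" .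
    have "y \<le> (p - 1) * y"
      using mult_right_mono[of 1 "p - 1" y] \<open>2 \<le> p\<close> \<open>0 \<le> y\<close> by simp
    with y_x have "y \<le> x"
      by linarith
    then have "C * (x + y) \<le> 2 * (C * x)"
      using mult_left_mono[OF _ \<open>0 \<le> C\<close>, of y x] by (simp add: algebra_simps)
    also have "\<dots> \<le> p\<^sup>2 * (C * x)"
      using mult_mono[of 2 p 2 p] \<open>2 \<le> p\<close> \<open>0 \<le> C\<close> \<open>0 \<le> x\<close>
      by (intro mult_right_mono) (auto simp: power2_eq_square)
    also have "\<dots> \<le> S"
      using x_n \<open>w n \<le> S\<close> by (simp add: mult.assoc)
    finally have "C * ?v (2 * i) \<le> ?v n"
      using v_even vn \<open>0 \<le> w 1\<close> by (simp add: algebra_simps)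
    moreover have "?v n \<le> ?v 1 + ?v (2 * i)"
      using v1 vn v_even \<open>0 \<le> x\<close> \<open>0 \<le> y\<close> by (simp add: algebra_simps)
    ultimately show ?thesis
      using odd_le_even by blast
  qed
  ultimately show ?thesis
    by (simp add: in_cone_def)
qed

lemma theta_prod_in_cone:
  assumes "2 \<le> p" and "\<forall>m\<ge>1. A m = p * C m" and "\<forall>m\<ge>1. C (Suc m) = p\<^sup>2 * C m"
    and "\<forall>m\<ge>1. 0 \<le> C m"
  shows "in_cone n p (C (Suc k)) (theta_prod n (\<lambda>m. Theta n (A m) (C m)) k d)"
proof (induction d arbitrary: k)
  case 0
  show ?case
    by (simp add: in_cone_e1)
next
  case (Suc d)
  have "in_cone n p (p\<^sup>2 * C (Suc k)) (theta_prod n (\<lambda>m. Theta n (A m) (C m)) (Suc k) d)"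
    using Suc.IH[of "Suc k"] assms(3) by simp
  then show ?case
    using assms by (simp add: Theta_maps_cone)
qed

theorem mainTheorem8:
  fixes n p c1 :: nat and a c :: "nat \<Rightarrow> nat" and mu :: "nat \<Rightarrow> nat \<Rightarrow> real"
  assumes "n \<ge> 4" and "even n" and "p \<ge> n + 1" and "c1 > 0"
    and "c 1 = c1"
    and "\<forall>k\<ge>1. c (Suc k) = p ^ 2 * c k"
    and "\<forall>k\<ge>1. a k = p * c k"
    and "\<forall>k. \<exists>r>0. \<forall>i\<in>{1..n}.
           ((\<lambda>d. normalize_vec n
                   (theta_prod n (\<lambda>m. Theta n (real (a m)) (real (c m))) k d) i)
            \<longlongrightarrow> mu k i / r) sequentially"
  shows "\<forall>k\<ge>1. \<forall>i. 1 \<le> i \<and> i \<le> n div 2 - 1 \<longrightarrow>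
           mu k (2 * i + 1) \<le> 1 / (real p - 1) * mu k (2 * i)
         \<and> mu k (2 * i) \<le> 1 / real (c k) * mu k n
         \<and> (real (c k) - 1) * mu k (2 * i) \<le> mu k 1"
proof (intro allI impI)
  fix k i :: nat assume k: "k \<ge> 1" and i: "1 \<le> i \<and> i \<le> n div 2 - 1"
  have c_pos: "c k > 0"
    using k by (induction k rule: dec_induct) (use assms(3-6) in simp_all)
  have "2 \<le> real p"
    using assms by simp
  obtain r where "r > 0" and lim: "\<forall>j\<in>{1..n}. (\<lambda>d. normalize_vec n
      (theta_prod n (\<lambda>m. Theta n (real (a m)) (real (c m))) k d) j) \<longlonglongrightarrow> mu k j / r"
    using assms(8) by blast
  have "in_cone n p (c (Suc k)) (theta_prod n (\<lambda>m. Theta n (real (a m)) (real (c m))) k d)" for d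
    using \<open>2 \<le> real p\<close> assms(6,7) by (intro theta_prod_in_cone) simp_all
  then have "in_cone n p (c (Suc k)) (mu k)"
    by (rule in_cone_of_normalized_limit[OF _ \<open>r > 0\<close> lim])
  moreover have "c k \<le> c (Suc k)"
    using assms(3,6) k by simp
  ultimately have "in_cone n p (c k) (mu k)"
    using in_cone_antimono[of n p "c (Suc k)" "mu k" "c k"] by simp
  moreover have "2 * i + 2 \<le> n"
    using i assms(1) by auto
  ultimately show "mu k (2 * i + 1) \<le> 1 / (real p - 1) * mu k (2 * i)
         \<and> mu k (2 * i) \<le> 1 / real (c k) * mu k n
         \<and> (real (c k) - 1) * mu k (2 * i) \<le> mu k 1"
    using in_cone_estimates \<open>2 \<le> real p\<close> c_pos i by simp
qed

end
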